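(* Let $k\ge 2$ and let $L$ be a subspace of $\bigwedge^{k}V$ such that $e_{1}\wedge e_{2}\wedge\bigwedge^{k-2}V\subseteq L$ and $e_1\wedge e_2\wedge x=0$ for all $x\in L$. If $N_{j\to i}L=L$ for all $i<j$ with $i,j\geq3$, then $L$ has a basis $B$ such that for every $b\in B$ and every $j\geq3$, either $b\in\bigwedge^kV^{(j)}$ or $b\in e_j\wedge\bigwedge^{k-1}V^{(j)}$ (i.e. the basis is monomial with respect to every $e_j$ with $j\ge3$).
   Context: $\mathbb{F}$ is a field (assumed throughout the paper, for expository purposes, to have characteristic not $2$), $V$ is an $n$-dimensional $\mathbb{F}$-vector space with a fixed basis $e_1,\dots,e_n$, and $\bigwedge V$ its exterior algebra. For $j\in[n]$, $V^{(j)}$ is the span of $\{e_h:h\neq j\}$, and $\bigwedge V^{(j)}$ is viewed as a subalgebra of $\bigwedge V$. Slow shift: for distinct $i,j\in[n]$ and nonzero $m\in\bigwedge^kV$, write uniquely $m=x+e_j\wedge y$ with $x\in\bigwedge^kV^{(j)}$, $y\in\bigwedge^{k-1}V^{(j)}$, and set $N_{j\to i}m=x+e_i\wedge y$ if this is nonzero, and $N_{j\to i}m=e_j\wedge y$ otherwise (the limit as $t\to0$ of the projective action of the linear map $e_j\mapsto e_i+te_j$ fixing the other $e_h$). For a subspace $L$ of $\bigwedge^kV$, $N_{j\to i}L$ is the span of $\{N_{j\to i}m:m\in L\setminus\{0\}\}$. *)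

theory Defs
  imports Complex_Main "HOL-Library.Function_Algebras"
begin

text \<open>Coordinate model of the exterior algebra of V = F^n with basis e_1..e_n.
  An element of the exterior algebra is a function assigning to each finite index
  set S the coefficient of e_S = e_{s_1} wedge ... wedge e_{s_k} (s_1 < ... < s_k).\<close>

type_synonym 'a ext = "nat set \<Rightarrow> 'a"

definition fscale :: "'a::field \<Rightarrow> 'a ext \<Rightarrow> 'a ext" where
  "fscale c x = (\<lambda>S. c * x S)"

lemma vector_space_fscale: "vector_space (fscale :: 'a::field \<Rightarrow> 'a ext \<Rightarrow> 'a ext)"
  unfolding vector_space_def fscale_def by (auto simp: algebra_simps fun_eq_iff)

text \<open>Sign of e_S wedge e_T = sgn S T * e_(S union T) for disjoint S, T.\<close>
definition ext_sign :: "nat set \<Rightarrow> nat set \<Rightarrow> 'a::field" where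
  "ext_sign S T = (- 1) ^ card {(s, t). s \<in> S \<and> t \<in> T \<and> t < s}"

definition wedge :: "'a::field ext \<Rightarrow> 'a ext \<Rightarrow> 'a ext" where
  "wedge x y = (\<lambda>U. \<Sum>S\<in>Pow U. ext_sign S (U - S) * x S * y (U - S))"

definition evec :: "nat \<Rightarrow> 'a::field ext" where
  "evec j = (\<lambda>S. if S = {j} then 1 else 0)"

definition ext_pow :: "nat set \<Rightarrow> nat \<Rightarrow> 'a::field ext set" where
  "ext_pow A k = {x. \<forall>S. x S \<noteq> 0 \<longrightarrow> S \<subseteq> A \<and> card S = k}"

abbreviation Vj :: "nat \<Rightarrow> nat \<Rightarrow> nat set" where
  "Vj n j \<equiv> {1..n} - {j}"

definition slow_shift :: "nat \<Rightarrow> nat \<Rightarrow> nat \<Rightarrow> nat \<Rightarrow> 'a::field ext \<Rightarrow> 'a ext" where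
  "slow_shift n k j i m =
     (let (x, y) = (THE (x, y). x \<in> ext_pow (Vj n j) k \<and> y \<in> ext_pow (Vj n j) (k - 1)
                                 \<and> m = x + wedge (evec j) y)
      in if x + wedge (evec i) y \<noteq> 0 then x + wedge (evec i) y else wedge (evec j) y)"

definition slow_shift_space :: "nat \<Rightarrow> nat \<Rightarrow> nat \<Rightarrow> nat \<Rightarrow> 'a::field ext set \<Rightarrow> 'a ext set" where
  "slow_shift_space n k j i L = module.span fscale (slow_shift n k j i ` (L - {0}))"

end

theory Submission
  imports Defs
begin

text \<open>
  For j \<ge> 4 every slow shift N_{j->3} m is monomial in e_j, so L = N_{j->3} L is spanned by
  elements monomial in e_j and hence closed under the coordinate projection that kills all
  monomials containing e_j. Splitting along e_4, ..., e_n in turn, L is spanned by elements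
  of L monomial in every e_j with j \<ge> 4. For e_3 no shift is used: split such an element
  into its monomials divisible by e_1 \<and> e_2, which lie in L and may be split further along
  e_3, and the rest. As e_1 \<and> e_2 annihilates L, each remaining monomial contains exactly
  one of e_1, e_2; all of them have degree k and agree on e_4, ..., e_n, so they agree on
  e_3 as well. A maximal independent subset of the resulting spanning set is the basis.
\<close>

interpretation Ext: vector_space "fscale :: 'a::field \<Rightarrow> 'a ext \<Rightarrow> 'a ext"
  by (rule vector_space_fscale)

definition ext_basis :: "nat set \<Rightarrow> 'a::field ext" where
  "ext_basis A = (\<lambda>S. if S = A then 1 else 0)"

definition restrict_coeffs :: "(nat set \<Rightarrow> bool) \<Rightarrow> 'a::field ext \<Rightarrow> 'a ext" where
  "restrict_coeffs P x = (\<lambda>S. if P S then x S else 0)"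

definition monomial_wrt :: "nat \<Rightarrow> 'a::field ext \<Rightarrow> bool" where
  "monomial_wrt j x \<longleftrightarrow> (\<forall>S. x S \<noteq> 0 \<longrightarrow> j \<notin> S) \<or> (\<forall>S. x S \<noteq> 0 \<longrightarrow> j \<in> S)"

lemma ext_sign_square: "ext_sign A B * ext_sign A B = (1::'a::field)"
  unfolding ext_sign_def by (simp add: power_mult_distrib[symmetric])

lemma ext_sign_nonzero: "ext_sign A B \<noteq> (0::'a::field)"
  unfolding ext_sign_def by simp

lemma evec_eq_ext_basis: "evec j = ext_basis {j}"
  unfolding evec_def ext_basis_def by simp

lemma wedge_ext_basis:
  "wedge (ext_basis A) y U =
     (if finite U \<and> A \<subseteq> U then ext_sign A (U - A) * y (U - A) else (0::'a::field))"
proof (cases "finite U")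
  case True
  have "wedge (ext_basis A) y U = (\<Sum>S\<in>Pow U. if S = A then ext_sign S (U - S) * y (U - S) else 0)"
    unfolding wedge_def ext_basis_def by (intro sum.cong) auto
  also have "\<dots> = (if A \<in> Pow U then ext_sign A (U - A) * y (U - A) else 0)"
    using True by (intro sum.delta) simp
  finally show ?thesis using True by auto
qed (simp add: wedge_def)

lemma wedge_ext_basis_nonzeroD:
  "wedge (ext_basis A) y U \<noteq> 0 \<Longrightarrow> finite U \<and> A \<subseteq> U \<and> y (U - A) \<noteq> 0"
  by (auto simp: wedge_ext_basis split: if_splits)

lemma wedge_ext_basis_disjoint_Un:
  assumes "finite A" "finite S" "A \<inter> S = {}"
  shows "wedge (ext_basis A) y (A \<union> S) = ext_sign A S * y S"
proof -
  have "A \<union> S - A = S" using assms(3) by auto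
  then show ?thesis using assms(1,2) by (simp add: wedge_ext_basis)
qed

lemma wedge_evec_evec:
  assumes "i < j"
  shows "wedge (evec i) (evec j) = (ext_basis {i, j} :: 'a::field ext)"
proof
  fix U
  have "{(s, t). s \<in> {i} \<and> t \<in> {j} \<and> t < s} = {}" using assms by auto
  then have sign: "ext_sign {i} {j} = (1::'a)" unfolding ext_sign_def by (simp only: card.empty power_0)
  show "wedge (evec i) (evec j) U = (ext_basis {i, j} :: 'a ext) U"
    unfolding evec_eq_ext_basis wedge_ext_basis
    using assms sign by (auto simp: ext_basis_def insert_Diff_if)
qed

lemma ext_pow_mono: "A \<subseteq> B \<Longrightarrow> x \<in> ext_pow A k \<Longrightarrow> x \<in> ext_pow B k"
  unfolding ext_pow_def by auto

lemma ext_pow_factor_ext_basis: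
  fixes x :: "'a::field ext"
  assumes "C \<subseteq> A" "finite A" "x \<in> ext_pow A k" and supp: "\<forall>S. x S \<noteq> 0 \<longrightarrow> C \<subseteq> S"
  shows "\<exists>y. y \<in> ext_pow (A - C) (k - card C) \<and> x = wedge (ext_basis C) y"
proof -
  define y where "y = (\<lambda>T. if T \<inter> C = {} then ext_sign C T * x (C \<union> T) else 0)"
  have "y \<in> ext_pow (A - C) (k - card C)"
    unfolding ext_pow_def
  proof (intro CollectI allI impI)
    fix T assume "y T \<noteq> 0"
    then have disj: "C \<inter> T = {}" and "x (C \<union> T) \<noteq> 0" unfolding y_def by (auto split: if_splits)
    then have "C \<union> T \<subseteq> A" "card (C \<union> T) = k" using assms(3) unfolding ext_pow_def by auto
    moreover have "card (C \<union> T) = card C + card T"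
      using disj calculation(1) assms(2) by (meson card_Un_disjoint finite_subset le_sup_iff)
    ultimately show "T \<subseteq> A - C \<and> card T = k - card C" using disj by auto
  qed
  moreover have "x U = wedge (ext_basis C) y U" for U
  proof (cases "finite U \<and> C \<subseteq> U")
    case True
    then have "C \<union> (U - C) = U" "(U - C) \<inter> C = {}" by auto
    then show ?thesis using True by (simp add: wedge_ext_basis y_def mult.assoc[symmetric] ext_sign_square)
  next
    case False
    then have "x U = 0" using assms(2,3) supp finite_subset unfolding ext_pow_def by blast
    then show ?thesis using False wedge_ext_basis by metis
  qed
  ultimately show ?thesis by blast
qed

lemma wedge_ext_basis_eq_0_imp_meets:
  assumes "wedge (ext_basis A) x = 0" "finite A" "finite S" "x S \<noteq> 0"
  shows "A \<inter> S \<noteq> {}"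
proof
  assume "A \<inter> S = {}"
  then have "wedge (ext_basis A) x (A \<union> S) = ext_sign A S * x S"
    using assms(2,3) by (rule wedge_ext_basis_disjoint_Un[rotated 2])
  then show False using assms(1,4) ext_sign_nonzero by fastforce
qed

lemma restrict_coeffs_split: "restrict_coeffs P x + restrict_coeffs (\<lambda>S. \<not> P S) x = x"
  unfolding restrict_coeffs_def by auto

lemma restrict_coeffs_ext_pow: "x \<in> ext_pow A k \<Longrightarrow> restrict_coeffs P x \<in> ext_pow A k"
  unfolding ext_pow_def restrict_coeffs_def by auto

lemma linear_restrict_coeffs:
  "Vector_Spaces.linear fscale fscale (restrict_coeffs P :: 'a::field ext \<Rightarrow> 'a ext)"
  unfolding Vector_Spaces.linear_iff using vector_space_fscale
  by (auto simp: restrict_coeffs_def fscale_def fun_eq_iff)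

lemma monomial_wrt_restrict_coeffs: "monomial_wrt j x \<Longrightarrow> monomial_wrt j (restrict_coeffs P x)"
  unfolding monomial_wrt_def restrict_coeffs_def by auto

lemma monomial_wrt_restrict_coeffsI:
  "(\<forall>S. P S \<longrightarrow> j \<in> S) \<or> (\<forall>S. P S \<longrightarrow> j \<notin> S) \<Longrightarrow> monomial_wrt j (restrict_coeffs P x)"
  unfolding monomial_wrt_def restrict_coeffs_def by auto

lemma monomial_wrt_iff_supports_agree:
  "monomial_wrt j x \<longleftrightarrow> (\<forall>S T. x S \<noteq> 0 \<longrightarrow> x T \<noteq> 0 \<longrightarrow> (j \<in> S \<longleftrightarrow> j \<in> T))"
  unfolding monomial_wrt_def by blast

lemma monomial_wrt_cases:
  fixes x :: "'a::field ext"
  assumes "monomial_wrt j x" "x \<in> ext_pow A k" "j \<in> A" "finite A"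
  shows "x \<in> ext_pow (A - {j}) k \<or> x \<in> {wedge (evec j) y | y. y \<in> ext_pow (A - {j}) (k - 1)}"
  using assms(1) unfolding monomial_wrt_def
proof
  assume "\<forall>S. x S \<noteq> 0 \<longrightarrow> j \<notin> S"
  then show ?thesis using assms(2) unfolding ext_pow_def by auto
next
  assume "\<forall>S. x S \<noteq> 0 \<longrightarrow> j \<in> S"
  then obtain y where "y \<in> ext_pow (A - {j}) (k - 1)" "x = wedge (evec j) y"
    using ext_pow_factor_ext_basis[of "{j}" A x k] assms(2-4) by (auto simp: evec_eq_ext_basis)
  then show ?thesis by blast
qed

lemma ext_pow_split_evec:
  fixes m :: "'a::field ext"
  assumes "j \<in> A" "finite A" "m \<in> ext_pow A k"
  shows "\<exists>x y. x \<in> ext_pow (A - {j}) k \<and> y \<in> ext_pow (A - {j}) (k - 1) \<and>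
               m = x + wedge (evec j) y"
proof -
  define x where "x = restrict_coeffs (\<lambda>S. j \<notin> S) m"
  have x: "x \<in> ext_pow (A - {j}) k"
    using assms(3) unfolding x_def ext_pow_def restrict_coeffs_def by auto
  have "restrict_coeffs (\<lambda>S. j \<in> S) m \<in> ext_pow A k"
    using assms(3) by (rule restrict_coeffs_ext_pow)
  moreover have "\<forall>S. restrict_coeffs (\<lambda>S. j \<in> S) m S \<noteq> 0 \<longrightarrow> {j} \<subseteq> S"
    by (simp add: restrict_coeffs_def)
  ultimately obtain y where y: "y \<in> ext_pow (A - {j}) (k - card {j})"
    and "restrict_coeffs (\<lambda>S. j \<in> S) m = wedge (ext_basis {j}) y"
    using ext_pow_factor_ext_basis[of "{j}" A _ k] assms(1,2) by blast
  moreover have "m = x + restrict_coeffs (\<lambda>S. j \<in> S) m"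
    using restrict_coeffs_split[of "\<lambda>S. j \<notin> S" m] by (simp add: x_def)
  ultimately show ?thesis using x by (auto simp: evec_eq_ext_basis)
qed

lemma ext_split_evec_coeffs:
  fixes x :: "'a::field ext"
  assumes "finite A" "x \<in> ext_pow (A - {j}) k" "y \<in> ext_pow (A - {j}) l"
  shows "x = restrict_coeffs (\<lambda>S. j \<notin> S) (x + wedge (evec j) y)"
    and "y = (\<lambda>T. if j \<notin> T \<and> finite T
                    then ext_sign {j} T * (x + wedge (evec j) y) (insert j T) else 0)"
proof -
  have x_avoids: "x S = 0" if "j \<in> S" for S
    using assms(2) that unfolding ext_pow_def by auto
  show "x = restrict_coeffs (\<lambda>S. j \<notin> S) (x + wedge (evec j) y)"
    using x_avoids by (auto simp: fun_eq_iff restrict_coeffs_def evec_eq_ext_basis wedge_ext_basis)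
  have "y T = ext_sign {j} T * (x + wedge (evec j) y) (insert j T)" if "j \<notin> T" "finite T" for T
    using that x_avoids[of "insert j T"]
    by (simp add: evec_eq_ext_basis wedge_ext_basis mult.assoc[symmetric] ext_sign_square)
  moreover have "y T = 0" if "\<not> (j \<notin> T \<and> finite T)" for T
    using that assms(1,3) finite_subset unfolding ext_pow_def by blast
  ultimately show "y = (\<lambda>T. if j \<notin> T \<and> finite T
                             then ext_sign {j} T * (x + wedge (evec j) y) (insert j T) else 0)"
    by auto
qed

lemma ext_split_evec_unique:
  fixes x :: "'a::field ext"
  assumes "finite A" "x \<in> ext_pow (A - {j}) k" "y \<in> ext_pow (A - {j}) l"
    and "x' \<in> ext_pow (A - {j}) k" "y' \<in> ext_pow (A - {j}) l"
    and "x + wedge (evec j) y = x' + wedge (evec j) y'"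
  shows "x = x' \<and> y = y'"
  using ext_split_evec_coeffs[OF assms(1-3)] ext_split_evec_coeffs[OF assms(1,4,5)] assms(6)
  by metis

lemma slow_shift_split:
  fixes x :: "'a::field ext"
  assumes "x \<in> ext_pow (Vj n j) k" "y \<in> ext_pow (Vj n j) (k - 1)"
  shows "slow_shift n k j i (x + wedge (evec j) y) =
           (if x + wedge (evec i) y \<noteq> 0 then x + wedge (evec i) y else wedge (evec j) y)"
proof -
  have "(THE (x', y'). x' \<in> ext_pow (Vj n j) k \<and> y' \<in> ext_pow (Vj n j) (k - 1)
                       \<and> x + wedge (evec j) y = x' + wedge (evec j) y') = (x, y)"
    using assms ext_split_evec_unique[OF finite_atLeastAtMost assms]
    by (intro the_equality) auto
  then show ?thesis unfolding slow_shift_def by simp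
qed

lemma monomial_wrt_slow_shift:
  fixes m :: "'a::field ext"
  assumes "j \<in> {1..n}" "i \<noteq> j" "m \<in> ext_pow {1..n} k"
  shows "monomial_wrt j (slow_shift n k j i m)"
proof -
  obtain x y where x: "x \<in> ext_pow (Vj n j) k" and y: "y \<in> ext_pow (Vj n j) (k - 1)"
    and m: "m = x + wedge (evec j) y"
    using ext_pow_split_evec[OF assms(1) _ assms(3)] by auto
  have "j \<notin> S" if "(x + wedge (evec i) y) S \<noteq> 0" for S
  proof -
    have "x S \<noteq> 0 \<or> y (S - {i}) \<noteq> 0"
      using that wedge_ext_basis_nonzeroD[of "{i}" y S] by (auto simp: evec_eq_ext_basis)
    then show ?thesis using x y assms(2) unfolding ext_pow_def by auto
  qed
  moreover have "j \<in> S" if "wedge (evec j) y S \<noteq> 0" for S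
    using that wedge_ext_basis_nonzeroD[of "{j}" y S] by (auto simp: evec_eq_ext_basis)
  ultimately show ?thesis
    unfolding m slow_shift_split[OF x y] monomial_wrt_def by auto
qed

lemma restrict_coeffs_avoid_mem_span:
  fixes G :: "'a::field ext set"
  assumes "\<forall>g\<in>G. monomial_wrt j g" "x \<in> Ext.span G"
  shows "restrict_coeffs (\<lambda>S. j \<notin> S) x \<in> Ext.span G"
proof -
  let ?P = "restrict_coeffs (\<lambda>S. j \<notin> S) :: 'a ext \<Rightarrow> 'a ext"
  have "?P g = g \<or> ?P g = 0" if "g \<in> G" for g
    using assms(1) that unfolding monomial_wrt_def restrict_coeffs_def by (auto simp: fun_eq_iff)
  then have "?P ` G \<subseteq> Ext.span G" by (metis Ext.span_base Ext.span_zero image_subsetI)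
  then have "Ext.span (?P ` G) \<subseteq> Ext.span G" using Ext.span_minimal by blast
  moreover have "Ext.span (?P ` G) = ?P ` Ext.span G"
    by (rule module_hom.span_image[OF module_hom_linearI[OF linear_restrict_coeffs]])
  ultimately show ?thesis using assms(2) by blast
qed

lemma restrict_coeffs_avoid_mem_of_slow_shift_stable:
  fixes L :: "'a::field ext set"
  assumes "slow_shift_space n k j i L = L" "L \<subseteq> ext_pow {1..n} k"
    and "j \<in> {1..n}" "i \<noteq> j" "x \<in> L"
  shows "restrict_coeffs (\<lambda>S. j \<notin> S) x \<in> L"
proof -
  have "\<forall>g\<in>slow_shift n k j i ` (L - {0}). monomial_wrt j g"
    using monomial_wrt_slow_shift assms(2-4) by blast
  moreover have "Ext.span (slow_shift n k j i ` (L - {0})) = L"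
    using assms(1) unfolding slow_shift_space_def .
  ultimately show ?thesis using restrict_coeffs_avoid_mem_span assms(5) by metis
qed

lemma subspace_subset_span_monomial_wrt:
  fixes L :: "'a::field ext set"
  assumes L: "Ext.subspace L" and "finite J"
    and "\<forall>j\<in>J. \<forall>x\<in>L. restrict_coeffs (\<lambda>S. j \<notin> S) x \<in> L"
  shows "L \<subseteq> Ext.span {b \<in> L. \<forall>j\<in>J. monomial_wrt j b}"
  using assms(2,3)
proof (induction J rule: finite_induct)
  case empty
  show ?case using Ext.span_superset by auto
next
  case (insert j J)
  let ?H = "{b \<in> L. \<forall>i\<in>insert j J. monomial_wrt i b}"
  have "b \<in> Ext.span ?H" if b: "b \<in> L" "\<forall>i\<in>J. monomial_wrt i b" for b
  proof -
    define avoid where "avoid = restrict_coeffs (\<lambda>S. j \<notin> S) b"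
    define contain where "contain = restrict_coeffs (\<lambda>S. j \<in> S) b"
    have b_split: "b = avoid + contain"
      using restrict_coeffs_split[of "\<lambda>S. j \<notin> S" b] by (simp add: avoid_def contain_def)
    have "avoid \<in> L" using insert.prems b(1) by (simp add: avoid_def)
    moreover have "contain \<in> L"
      using Ext.subspace_diff[OF L b(1) \<open>avoid \<in> L\<close>] b_split by simp
    moreover have "monomial_wrt j avoid" "monomial_wrt j contain"
      unfolding avoid_def contain_def by (simp_all add: monomial_wrt_restrict_coeffsI)
    moreover have "monomial_wrt i avoid" "monomial_wrt i contain" if "i \<in> J" for i
      using b(2) that unfolding avoid_def contain_def by (simp_all add: monomial_wrt_restrict_coeffs)
    ultimately have "avoid \<in> ?H" "contain \<in> ?H" by auto
    then show ?thesis unfolding b_split by (intro Ext.span_add Ext.span_base)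
  qed
  then have "{b \<in> L. \<forall>i\<in>J. monomial_wrt i b} \<subseteq> Ext.span ?H" by blast
  then have "Ext.span {b \<in> L. \<forall>i\<in>J. monomial_wrt i b} \<subseteq> Ext.span ?H"
    by (rule Ext.span_minimal) simp
  then show ?case using insert by auto
qed

lemma mem_iff_of_card_eq_of_Diff_singleton_eq:
  assumes "finite T" "finite T'" "card T = card T'" "T - {a} = T' - {a}"
  shows "a \<in> T \<longleftrightarrow> a \<in> T'"
proof -
  have "a \<in> U'" if "finite U" "card U = card U'" "U - {a} = U' - {a}" "a \<in> U" for U U' :: "'a set"
  proof (rule ccontr)
    assume "a \<notin> U'"
    then have "U' = U - {a}" using that(3) by blast
    then show False using card_Diff1_less[OF that(1,4)] that(2) by simp
  qed
  then show ?thesis using assms by metis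
qed

lemma monomial_wrt_from_other_coordinates:
  fixes x :: "'a::field ext"
  assumes x: "x \<in> ext_pow A k" and "finite A" "a \<notin> C"
    and card_C: "\<forall>S. x S \<noteq> 0 \<longrightarrow> card (S \<inter> C) = c"
    and others: "\<forall>j\<in>A - C - {a}. monomial_wrt j x"
  shows "monomial_wrt a x"
  unfolding monomial_wrt_iff_supports_agree
proof (intro allI impI)
  fix S T assume S: "x S \<noteq> 0" and T: "x T \<noteq> 0"
  have "S \<subseteq> A" "card S = k" "T \<subseteq> A" "card T = k"
    using x S T unfolding ext_pow_def by auto
  then have fin: "finite S" "finite T" using \<open>finite A\<close> finite_subset by auto
  have "card (S - C) = card (T - C)"
    using card_Diff_subset_Int fin card_C S T \<open>card S = k\<close> \<open>card T = k\<close> by (metis finite_Int)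
  moreover have "S - C - {a} = T - C - {a}"
    using others S T \<open>S \<subseteq> A\<close> \<open>T \<subseteq> A\<close> unfolding monomial_wrt_iff_supports_agree by blast
  ultimately have "a \<in> S - C \<longleftrightarrow> a \<in> T - C"
    using fin by (intro mem_iff_of_card_eq_of_Diff_singleton_eq) auto
  then show "a \<in> S \<longleftrightarrow> a \<in> T" using \<open>a \<notin> C\<close> by blast
qed

lemma ext_basis_multiple_mem:
  fixes L :: "'a::field ext set"
  assumes multiples: "{wedge (ext_basis C) y | y. y \<in> ext_pow A l} \<subseteq> L"
    and "C \<subseteq> A" "finite A" "l = k - card C" "x \<in> ext_pow A k" "\<forall>S. x S \<noteq> 0 \<longrightarrow> C \<subseteq> S"
  shows "x \<in> L"
proof -
  obtain y where "y \<in> ext_pow (A - C) (k - card C)" "x = wedge (ext_basis C) y"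
    using ext_pow_factor_ext_basis[OF assms(2,3,5,6)] by blast
  then show ?thesis using multiples ext_pow_mono[of "A - C" A] assms(4) by blast
qed

lemma monomial_from_4_in_span_monomial_from_3:
  fixes L :: "'a::field ext set"
  assumes n: "2 \<le> n" and L: "Ext.subspace L" "L \<subseteq> ext_pow {1..n} k"
    and contains: "{wedge (ext_basis {1, 2}) y | y. y \<in> ext_pow {1..n} (k - 2)} \<subseteq> L"
    and kills: "\<forall>x\<in>L. wedge (ext_basis {1, 2}) x = 0"
    and b: "b \<in> L" "\<forall>j\<in>{4..n}. monomial_wrt j b"
  shows "b \<in> Ext.span {c \<in> L. \<forall>j\<in>{3..n}. monomial_wrt j c}"
proof -
  let ?H = "{c \<in> L. \<forall>j\<in>{3..n}. monomial_wrt j c}"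
  have H_intro: "r \<in> ?H" if r: "r \<in> L" "monomial_wrt 3 r" "\<forall>j\<in>{4..n}. monomial_wrt j r" for r
  proof -
    have "monomial_wrt j r" if "j \<in> {3..n}" for j
    proof (cases "j = 3")
      case False
      then have "j \<in> {4..n}" using that by auto
      then show ?thesis using r(3) by blast
    qed (use r(2) in simp)
    then show ?thesis using r(1) by blast
  qed
  have bV: "b \<in> ext_pow {1..n} k" using L(2) b(1) by blast
  have multiple_mem: "restrict_coeffs P b \<in> L" if "\<forall>S. P S \<longrightarrow> {1, 2} \<subseteq> S" for P
  proof (rule ext_basis_multiple_mem[OF contains, where k = k])
    show "{1, 2} \<subseteq> {1..n}" using n by auto
    show "\<forall>S. restrict_coeffs P b S \<noteq> 0 \<longrightarrow> {1, 2} \<subseteq> S"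
      using that by (simp add: restrict_coeffs_def)
    show "restrict_coeffs P b \<in> ext_pow {1..n} k" using bV by (rule restrict_coeffs_ext_pow)
  qed simp_all
  define r1 where "r1 = restrict_coeffs (\<lambda>S. {1, 2} \<subseteq> S \<and> 3 \<in> S) b"
  define r2 where "r2 = restrict_coeffs (\<lambda>S. {1, 2} \<subseteq> S \<and> 3 \<notin> S) b"
  define r3 where "r3 = restrict_coeffs (\<lambda>S. \<not> {1, 2} \<subseteq> S) b"
  have b_split: "b = r1 + r2 + r3" unfolding r1_def r2_def r3_def restrict_coeffs_def by auto
  have "r1 \<in> L" "r2 \<in> L" unfolding r1_def r2_def by (simp_all add: multiple_mem)
  then have "r3 \<in> L"
    using Ext.subspace_diff[OF L(1) Ext.subspace_diff[OF L(1) b(1) \<open>r1 \<in> L\<close>] \<open>r2 \<in> L\<close>] b_split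
    by (simp add: algebra_simps)
  have mono4: "\<forall>j\<in>{4..n}. monomial_wrt j r1 \<and> monomial_wrt j r2 \<and> monomial_wrt j r3"
    using b(2) unfolding r1_def r2_def r3_def by (simp add: monomial_wrt_restrict_coeffs)
  have "monomial_wrt 3 r3"
  proof (rule monomial_wrt_from_other_coordinates[where A = "{1..n}" and C = "{1, 2}" and c = 1])
    show "r3 \<in> ext_pow {1..n} k" unfolding r3_def using bV by (rule restrict_coeffs_ext_pow)
    show "\<forall>S. r3 S \<noteq> 0 \<longrightarrow> card (S \<inter> {1, 2}) = 1"
    proof (intro allI impI)
      fix S assume "r3 S \<noteq> 0"
      then have "b S \<noteq> 0" "\<not> {1, 2} \<subseteq> S"
        unfolding r3_def restrict_coeffs_def by (auto split: if_splits)
      moreover have "finite S" using bV \<open>b S \<noteq> 0\<close> finite_subset unfolding ext_pow_def by blast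
      ultimately have "{1, 2} \<inter> S \<noteq> {}"
        using kills b(1) wedge_ext_basis_eq_0_imp_meets[of "{1, 2}"] by blast
      with \<open>\<not> {1, 2} \<subseteq> S\<close> have "S \<inter> {1, 2} = {1} \<or> S \<inter> {1, 2} = {2}" by auto
      then show "card (S \<inter> {1, 2}) = 1" by (elim disjE) simp_all
    qed
    have "{1..n} - {1, 2} - {3} = {4..n}" by auto
    then show "\<forall>j\<in>{1..n} - {1, 2} - {3}. monomial_wrt j r3" using mono4 by simp
  qed simp_all
  moreover have "monomial_wrt 3 r1" "monomial_wrt 3 r2"
    unfolding r1_def r2_def by (simp_all add: monomial_wrt_restrict_coeffsI)
  ultimately have "r1 \<in> ?H" "r2 \<in> ?H" "r3 \<in> ?H"
    using H_intro mono4 \<open>r1 \<in> L\<close> \<open>r2 \<in> L\<close> \<open>r3 \<in> L\<close> by simp_all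
  then show ?thesis unfolding b_split by (intro Ext.span_add Ext.span_base)
qed

lemma (in vector_space) basis_within_spanning_set:
  assumes "subspace L" "H \<subseteq> L" "L \<subseteq> span H"
  shows "\<exists>B\<subseteq>H. independent B \<and> span B = L"
proof -
  obtain B where B: "B \<subseteq> H" "independent B" "H \<subseteq> span B"
    using maximal_independent_subset by blast
  have "span B \<subseteq> L" using B(1) assms(1,2) span_minimal by blast
  moreover have "L \<subseteq> span B" using assms(3) B(3) span_minimal subspace_span by blast
  ultimately show ?thesis using B(1,2) by blast
qed

theorem corollary3p15:
  fixes n k :: nat and L :: "'a::field ext set"
  assumes char: "(2::'a) \<noteq> 0"
    and n2: "2 \<le> n"
    and k2: "2 \<le> k"
    and Lsub: "module.subspace fscale L"
    and LV: "L \<subseteq> ext_pow {1..n} k"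
    and contains: "{wedge (wedge (evec 1) (evec 2)) y | y. y \<in> ext_pow {1..n} (k - 2)} \<subseteq> L"
    and kills: "\<forall>x\<in>L. wedge (wedge (evec 1) (evec 2)) x = 0"
    and stable: "\<forall>i\<in>{1..n}. \<forall>j\<in>{1..n}. 3 \<le> i \<and> i < j \<longrightarrow> slow_shift_space n k j i L = L"
  shows "\<exists>B. B \<subseteq> L \<and> module.independent fscale B \<and> module.span fscale B = L \<and>
           (\<forall>b\<in>B. \<forall>j\<in>{3..n}.
              b \<in> ext_pow (Vj n j) k \<or>
              b \<in> {wedge (evec j) y | y. y \<in> ext_pow (Vj n j) (k - 1)})"
proof -
  have e12: "wedge (evec 1) (evec 2) = (ext_basis {1, 2} :: 'a ext)"
    by (simp add: wedge_evec_evec)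
  have closed: "\<forall>j\<in>{4..n}. \<forall>x\<in>L. restrict_coeffs (\<lambda>S. j \<notin> S) x \<in> L"
  proof (intro ballI)
    fix j x assume j: "j \<in> {4..n}" and "x \<in> L"
    have "slow_shift_space n k j 3 L = L" using stable[rule_format, of 3 j] j by auto
    from restrict_coeffs_avoid_mem_of_slow_shift_stable[OF this LV _ _ \<open>x \<in> L\<close>] j
    show "restrict_coeffs (\<lambda>S. j \<notin> S) x \<in> L" by auto
  qed
  define H where "H = {b \<in> L. \<forall>j\<in>{3..n}. monomial_wrt j b}"
  have "{b \<in> L. \<forall>j\<in>{4..n}. monomial_wrt j b} \<subseteq> Ext.span H"
    using monomial_from_4_in_span_monomial_from_3[OF n2 Lsub LV contains[unfolded e12] kills[unfolded e12]]
    unfolding H_def by blast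
  then have "L \<subseteq> Ext.span H"
    using subspace_subset_span_monomial_wrt[OF Lsub finite_atLeastAtMost closed] Ext.span_minimal
    by (meson Ext.subspace_span order_trans)
  then obtain B where B: "B \<subseteq> H" "Ext.independent B" "Ext.span B = L"
    using Ext.basis_within_spanning_set[OF Lsub _ \<open>L \<subseteq> Ext.span H\<close>] unfolding H_def by blast
  have "b \<in> ext_pow (Vj n j) k \<or> b \<in> {wedge (evec j) y | y. y \<in> ext_pow (Vj n j) (k - 1)}"
    if "b \<in> B" "j \<in> {3..n}" for b j
  proof (rule monomial_wrt_cases)
    show "monomial_wrt j b" "b \<in> ext_pow {1..n} k" using that B(1) LV by (auto simp: H_def)
  qed (use that in auto)
  then show ?thesis using B H_def by blast
qed

end
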